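(* Let $G=(V,E)$ be a hypergraph, let $(V_1,\dots,V_k)$ be a maximal minimum $k$-partition in $G$ for an integer $k\ge2$, and let $S\subseteq V_1$ and $T\subseteq V\setminus V_1$ be such that $T\cap V_j\ne\emptyset$ for every $j\in\{2,\dots,k\}$. If $(U,\overline U)$ is a minimum $(S,T)$-terminal cut, then $U\subseteq V_1$.
   Context: A hypergraph $G=(V,E)$ has finite vertex set $V$ and finite multiset $E$ of unit-cost hyperedges (subsets of $V$). For $X\subseteq V$, $\overline X=V\setminus X$ and $d(X)$ is the number of hyperedges meeting both $X$ and $\overline X$. For an (ordered) partition of $V$ into $k$ non-empty parts, its cost is the number of hyperedges meeting at least two parts; a minimum $k$-partition has minimum cost; a minimum $k$-partition $(V_1,\dots,V_k)$ is a maximal minimum $k$-partition if there is no minimum $k$-partition $(V_1',\dots,V_k')$ with $V_1\subsetneq V_1'$. For disjoint $S,T\subseteq V$, a 2-partition $(U,\overline U)$ is an $(S,T)$-terminal cut if $S\subseteq U\subseteq V\setminus T$, and it is minimum if $d(U)$ is minimum among such cuts. *)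

theory Defs
  imports Main "HOL-Library.Multiset"
begin

text \<open>A hypergraph (V, E): V a finite vertex set, E a finite multiset of hyperedges,
  each a subset of V. All hyperedges have unit cost.\<close>
definition hypergraph :: "'a set \<Rightarrow> 'a set multiset \<Rightarrow> bool" where
  "hypergraph V E \<longleftrightarrow> finite V \<and> (\<forall>e\<in>#E. e \<subseteq> V)"

definition cut_val :: "'a set \<Rightarrow> 'a set multiset \<Rightarrow> 'a set \<Rightarrow> nat" where
  "cut_val V E X = size (filter_mset (\<lambda>e. e \<inter> X \<noteq> {} \<and> e \<inter> (V - X) \<noteq> {}) E)"

definition is_k_partition :: "'a set \<Rightarrow> nat \<Rightarrow> (nat \<Rightarrow> 'a set) \<Rightarrow> bool" where
  "is_k_partition V k P \<longleftrightarrow>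
     (\<forall>i\<in>{1..k}. P i \<noteq> {}) \<and>
     (\<forall>i\<in>{1..k}. \<forall>j\<in>{1..k}. i \<noteq> j \<longrightarrow> P i \<inter> P j = {}) \<and>
     (\<Union>i\<in>{1..k}. P i) = V"

definition part_cost :: "'a set multiset \<Rightarrow> nat \<Rightarrow> (nat \<Rightarrow> 'a set) \<Rightarrow> nat" where
  "part_cost E k P = size (filter_mset (\<lambda>e. card {i\<in>{1..k}. e \<inter> P i \<noteq> {}} \<ge> 2) E)"

definition min_k_partition :: "'a set \<Rightarrow> 'a set multiset \<Rightarrow> nat \<Rightarrow> (nat \<Rightarrow> 'a set) \<Rightarrow> bool" where
  "min_k_partition V E k P \<longleftrightarrow> is_k_partition V k P \<and>
     (\<forall>Q. is_k_partition V k Q \<longrightarrow> part_cost E k P \<le> part_cost E k Q)"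

definition maximal_min_k_partition :: "'a set \<Rightarrow> 'a set multiset \<Rightarrow> nat \<Rightarrow> (nat \<Rightarrow> 'a set) \<Rightarrow> bool" where
  "maximal_min_k_partition V E k P \<longleftrightarrow> min_k_partition V E k P \<and>
     \<not> (\<exists>Q. min_k_partition V E k Q \<and> P 1 \<subset> Q 1)"

definition terminal_cut :: "'a set \<Rightarrow> 'a set \<Rightarrow> 'a set \<Rightarrow> 'a set \<Rightarrow> bool" where
  "terminal_cut V S T U \<longleftrightarrow> S \<subseteq> U \<and> U \<subseteq> V - T"

definition min_terminal_cut :: "'a set \<Rightarrow> 'a set multiset \<Rightarrow> 'a set \<Rightarrow> 'a set \<Rightarrow> 'a set \<Rightarrow> bool" where
  "min_terminal_cut V E S T U \<longleftrightarrow> terminal_cut V S T U \<and>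
     (\<forall>U'. terminal_cut V S T U' \<longrightarrow> cut_val V E U \<le> cut_val V E U')"

end

theory Submission
  imports Defs
begin

text \<open>Uncrossing. Since \<open>U \<inter> V\<^sub>1\<close> is again an \<open>(S,T)\<close>-terminal cut, minimality of \<open>U\<close> and
  submodularity of \<open>d\<close> give \<open>d(V\<^sub>1 \<union> U) \<le> d(V\<^sub>1)\<close>. The cost of a \<open>k\<close>-partition is \<open>d\<close> of its first
  part plus the number of crossing hyperedges that avoid the first part, and the latter can only
  drop when \<open>U\<close> is moved into the first part. The parts stay non-empty because \<open>T\<close> meets every
  \<open>V\<^sub>j\<close> and avoids \<open>U\<close>, so moving \<open>U\<close> yields a minimum \<open>k\<close>-partition with a larger first part
  unless \<open>U \<subseteq> V\<^sub>1\<close>.\<close>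

lemma size_filter_mset_add_le:
  assumes "\<And>x. x \<in># M \<Longrightarrow> of_bool (p x) + of_bool (q x) \<le> (of_bool (r x) + of_bool (s x) :: nat)"
  shows "size {#x \<in># M. p x#} + size {#x \<in># M. q x#} \<le> size {#x \<in># M. r x#} + size {#x \<in># M. s x#}"
  using assms
proof (induction M)
  case (add x M)
  then have "of_bool (p x) + of_bool (q x) \<le> (of_bool (r x) + of_bool (s x) :: nat)"
    by simp
  with add show ?case
    by (cases "p x"; cases "q x"; cases "r x"; cases "s x") auto
qed simp

lemma cut_val_submodular:
  assumes "hypergraph V E"
  shows "cut_val V E (X \<union> Y) + cut_val V E (X \<inter> Y) \<le> cut_val V E X + cut_val V E Y"
  unfolding cut_val_def
  by (rule size_filter_mset_add_le) (use assms in \<open>auto simp: hypergraph_def\<close>)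

definition outer_cost :: "'a set multiset \<Rightarrow> nat \<Rightarrow> (nat \<Rightarrow> 'a set) \<Rightarrow> nat" where
  "outer_cost E k P = size {#e \<in># E. e \<inter> P 1 = {} \<and> 2 \<le> card {i\<in>{1..k}. e \<inter> P i \<noteq> {}}#}"

lemma part_cost_eq_cut_val_add_outer_cost:
  assumes "hypergraph V E" and "is_k_partition V k P" and "1 \<le> k"
  shows "part_cost E k P = cut_val V E (P 1) + outer_cost E k P"
proof -
  define parts where "parts e = {i\<in>{1..k}. e \<inter> P i \<noteq> {}}" for e
  have crossing_iff: "2 \<le> card (parts e) \<and> e \<inter> P 1 \<noteq> {} \<longleftrightarrow> e \<inter> P 1 \<noteq> {} \<and> e \<inter> (V - P 1) \<noteq> {}"
    if "e \<in># E" for e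
  proof
    assume crossing: "2 \<le> card (parts e) \<and> e \<inter> P 1 \<noteq> {}"
    have "\<not> parts e \<subseteq> {1}"
      using crossing card_mono[of "{1}" "parts e"] by auto
    then obtain j where "j \<in> {1..k}" "j \<noteq> 1" "e \<inter> P j \<noteq> {}"
      unfolding parts_def by auto
    moreover have "P j \<subseteq> V - P 1"
      using assms(2,3) \<open>j \<in> {1..k}\<close> \<open>j \<noteq> 1\<close> unfolding is_k_partition_def by fastforce
    ultimately show "e \<inter> P 1 \<noteq> {} \<and> e \<inter> (V - P 1) \<noteq> {}"
      using crossing by blast
  next
    assume cut: "e \<inter> P 1 \<noteq> {} \<and> e \<inter> (V - P 1) \<noteq> {}"
    then obtain j where "j \<in> {1..k}" "j \<noteq> 1" "e \<inter> P j \<noteq> {}"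
      using assms(2) unfolding is_k_partition_def by blast
    then have "{1, j} \<subseteq> parts e"
      using cut assms(3) unfolding parts_def by auto
    then have "card {1, j} \<le> card (parts e)"
      by (rule card_mono[rotated]) (simp add: parts_def)
    with \<open>j \<noteq> 1\<close> cut show "2 \<le> card (parts e) \<and> e \<inter> P 1 \<noteq> {}"
      by simp
  qed
  have cut_eq: "{#e \<in># E. 2 \<le> card (parts e) \<and> e \<inter> P 1 \<noteq> {}#}
      = {#e \<in># E. e \<inter> P 1 \<noteq> {} \<and> e \<inter> (V - P 1) \<noteq> {}#}"
    using crossing_iff by (rule filter_mset_cong0)
  have "part_cost E k P = size {#e \<in># E. 2 \<le> card (parts e) \<and> e \<inter> P 1 \<noteq> {}#}
      + size {#e \<in># E. 2 \<le> card (parts e) \<and> e \<inter> P 1 = {}#}"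
    unfolding part_cost_def parts_def
    by (subst multiset_partition[where P = "\<lambda>e. e \<inter> P 1 \<noteq> {}"]) (simp add: filter_filter_mset conj_commute)
  also have "\<dots> = cut_val V E (P 1) + outer_cost E k P"
    unfolding cut_val_def outer_cost_def parts_def[symmetric] cut_eq by (simp add: conj_commute)
  finally show ?thesis .
qed

definition move_to_first :: "(nat \<Rightarrow> 'a set) \<Rightarrow> 'a set \<Rightarrow> nat \<Rightarrow> 'a set" where
  "move_to_first P U i = (if i = 1 then P 1 \<union> U else P i - U)"

lemma is_k_partition_move_to_first:
  assumes "is_k_partition V k P" and "1 \<le> k" and "U \<subseteq> V" and "\<forall>i\<in>{2..k}. \<not> P i \<subseteq> U"
  shows "is_k_partition V k (move_to_first P U)"
proof -
  have "move_to_first P U i \<noteq> {}" if "i \<in> {1..k}" for i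
    using assms that unfolding is_k_partition_def move_to_first_def
    by (cases "i = 1") auto
  moreover have "move_to_first P U i \<inter> move_to_first P U j = {}"
    if "i \<in> {1..k}" "j \<in> {1..k}" "i \<noteq> j" for i j
  proof -
    have "P i \<inter> P j = {}" "i \<noteq> 1 \<Longrightarrow> P 1 \<inter> P i = {}" "j \<noteq> 1 \<Longrightarrow> P 1 \<inter> P j = {}"
      using assms(1,2) that unfolding is_k_partition_def by auto
    then show ?thesis
      using that(3) unfolding move_to_first_def by auto
  qed
  moreover have "(\<Union>i\<in>{1..k}. move_to_first P U i) = V"
    using assms(1-3) unfolding is_k_partition_def move_to_first_def
    by (fastforce split: if_splits)
  ultimately show ?thesis
    unfolding is_k_partition_def by blast
qed

lemma outer_cost_move_to_first_le: "outer_cost E k (move_to_first P U) \<le> outer_cost E k P"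
proof -
  have "{i\<in>{1..k}. e \<inter> move_to_first P U i \<noteq> {}} = {i\<in>{1..k}. e \<inter> P i \<noteq> {}}"
    if "e \<inter> (P 1 \<union> U) = {}" for e :: "'a set"
    using that unfolding move_to_first_def by auto
  then show ?thesis
    unfolding outer_cost_def
    by (intro size_mset_mono filter_mset_mono_strong) (auto simp: move_to_first_def)
qed

theorem lemma4p1:
  fixes V :: "'a set" and E :: "'a set multiset" and k :: nat and P :: "nat \<Rightarrow> 'a set"
    and S T U :: "'a set"
  assumes "hypergraph V E"
    and "k \<ge> 2"
    and "maximal_min_k_partition V E k P"
    and "S \<subseteq> P 1"
    and "T \<subseteq> V - P 1"
    and "\<forall>j\<in>{2..k}. T \<inter> P j \<noteq> {}"
    and "min_terminal_cut V E S T U"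
  shows "U \<subseteq> P 1"
proof (rule ccontr)
  assume "\<not> U \<subseteq> P 1"
  define Q where "Q = move_to_first P U"
  have P_min: "min_k_partition V E k P" and P_maximal: "\<nexists>Q. min_k_partition V E k Q \<and> P 1 \<subset> Q 1"
    using assms(3) unfolding maximal_min_k_partition_def by auto
  have U_cut: "S \<subseteq> U" "U \<subseteq> V - T"
    using assms(7) unfolding min_terminal_cut_def terminal_cut_def by auto
  have "\<forall>j\<in>{2..k}. \<not> P j \<subseteq> U"
    using assms(6) U_cut by blast
  then have Q_partition: "is_k_partition V k Q"
    unfolding Q_def using P_min U_cut assms(2)
    by (intro is_k_partition_move_to_first) (auto simp: min_k_partition_def)
  have "terminal_cut V S T (U \<inter> P 1)"
    using U_cut assms(4) unfolding terminal_cut_def by auto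
  then have "cut_val V E U \<le> cut_val V E (P 1 \<inter> U)"
    using assms(7) unfolding min_terminal_cut_def by (simp add: Int_commute)
  with cut_val_submodular[OF assms(1), of "P 1" U]
  have "cut_val V E (Q 1) \<le> cut_val V E (P 1)"
    by (simp add: Q_def move_to_first_def)
  then have "part_cost E k Q \<le> part_cost E k P"
    using Q_partition P_min assms(1,2) outer_cost_move_to_first_le[of E k P U]
    by (simp add: part_cost_eq_cut_val_add_outer_cost min_k_partition_def Q_def)
  with Q_partition P_min have "min_k_partition V E k Q"
    unfolding min_k_partition_def by (meson order_trans)
  moreover have "P 1 \<subset> Q 1"
    using \<open>\<not> U \<subseteq> P 1\<close> by (auto simp: Q_def move_to_first_def)
  ultimately show False
    using P_maximal by blast
qed

end
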